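(* Let $G$ be a Nash equilibrium graph and $H\subseteq G$ a non-trivial $2$-edge-connected component. Let $\pi=u_0-u_1-\dots-u_k$ be a $2$-path in $H$, oriented so that each $u_i$ with $0\le i<k$ has bought the link $(u_i,u_{i+1})$, and suppose $g(G)\ge 2k$. For $0\le i\le k-2$ let $\Delta C(u_i)$ be the change in the cost of $u_i$ caused by the $2$-swap on $u_{i+1}$ (i.e. $u_i$ replaces its link $(u_i,u_{i+1})$ by the link $(u_i,u_{i+2})$). Then $$\Delta C(u_i)=U_{i+1}-U_{i+2}-\dots-U_{k-1}-N_i,$$ where $N_i$ is the number of vertices $v\in V(G)\setminus\bar\pi$ with $x_1(v)+k-i\le x_2(v)+i$.
   Context: Sum network creation game: players $V=\{1,\dots,n\}$, parameter $\alpha>0$; a strategy of $u$ is $s_u\subseteq V\setminus\{u\}$; $G_s$ has an edge $uv$ whenever $v\in s_u$ or $u\in s_v$, and is regarded as a digraph with arc $(u,v)$ when $v\in s_u$; the cost of $u$ is $c_u(s)=\alpha|s_u|+\sum_{v\ne u}d_{G_s}(u,v)$. A Nash equilibrium graph is $G_s$ for a strategy vector $s$ from which no player can strictly lower his cost unilaterally. A $2$-edge-connected component $H$ is a maximal bridgeless subgraph; non-trivial means at least $3$ vertices. For $u\in V(H)$, $T(u)$ is the connected component containing $u$ of the subgraph of $G$ induced by $(V(G)\setminus V(H))\cup\{u\}$; the weight of $u_i$ is $U_i=|T(u_i)|$. A $2$-path in $H$ is a path $u_0-\dots-u_k$ in $H$ with $deg^-_H(u_i)=deg^+_H(u_i)=1$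 for all $0<i<k$ (in- and out-degrees counted among arcs to vertices of $H$). $g(G)$ is the girth of $G$ ($\infty$ for a tree). The interior of $\pi$ is $\bar\pi=\bigcup_{0<j<k}T(u_j)$, and for $v\in V(G)\setminus\bar\pi$, $x_1(v)$ and $x_2(v)$ are the distances in the graph $G$ with the vertices of $\bar\pi$ removed from $v$ to $u_k$ and to $u_0$ respectively. *)

theory Defs
  imports Complex_Main "HOL-Library.Extended_Real"
begin

definition strategy_vector :: "'a set \<Rightarrow> ('a \<Rightarrow> 'a set) \<Rightarrow> bool" where
  "strategy_vector V s \<longleftrightarrow> (\<forall>u\<in>V. s u \<subseteq> V - {u})"

definition gadj :: "'a set \<Rightarrow> ('a \<Rightarrow> 'a set) \<Rightarrow> 'a \<Rightarrow> 'a \<Rightarrow> bool" where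
  "gadj V s a b \<longleftrightarrow> a \<in> V \<and> b \<in> V \<and> (b \<in> s a \<or> a \<in> s b)"

definition walk_in :: "('a \<Rightarrow> 'a \<Rightarrow> bool) \<Rightarrow> 'a set \<Rightarrow> 'a list \<Rightarrow> bool" where
  "walk_in E W p \<longleftrightarrow> p \<noteq> [] \<and> set p \<subseteq> W \<and> (\<forall>i. Suc i < length p \<longrightarrow> E (p ! i) (p ! Suc i))"

definition dist_in :: "('a \<Rightarrow> 'a \<Rightarrow> bool) \<Rightarrow> 'a set \<Rightarrow> 'a \<Rightarrow> 'a \<Rightarrow> enat" where
  "dist_in E W x y = (INF p \<in> {p. walk_in E W p \<and> hd p = x \<and> last p = y}. enat (length p - 1))"

definition cost :: "real \<Rightarrow> 'a set \<Rightarrow> ('a \<Rightarrow> 'a set) \<Rightarrow> 'a \<Rightarrow> ereal" where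
  "cost \<alpha> V s u = ereal (\<alpha> * real (card (s u)))
      + ereal_of_enat (\<Sum>v\<in>V - {u}. dist_in (gadj V s) V u v)"

definition nash_equilibrium :: "real \<Rightarrow> 'a set \<Rightarrow> ('a \<Rightarrow> 'a set) \<Rightarrow> bool" where
  "nash_equilibrium \<alpha> V s \<longleftrightarrow> strategy_vector V s \<and>
     (\<forall>u\<in>V. \<forall>t. t \<subseteq> V - {u} \<longrightarrow> cost \<alpha> V s u \<le> cost \<alpha> V (s(u := t)) u)"

definition connected_in :: "('a \<Rightarrow> 'a \<Rightarrow> bool) \<Rightarrow> 'a set \<Rightarrow> bool" where
  "connected_in E W \<longleftrightarrow> (\<forall>x\<in>W. \<forall>y\<in>W. dist_in E W x y < \<infinity>)"

definition bridgeless_in :: "('a \<Rightarrow> 'a \<Rightarrow> bool) \<Rightarrow> 'a set \<Rightarrow> bool" where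
  "bridgeless_in E W \<longleftrightarrow> (\<forall>x\<in>W. \<forall>y\<in>W. E x y \<longrightarrow>
      connected_in (\<lambda>a b. E a b \<and> {a, b} \<noteq> {x, y}) W)"

text \<open>W is the vertex set of a 2-edge-connected component: a maximal connected bridgeless
  subgraph (maximal such subgraphs are induced, so it is determined by its vertex set).\<close>
definition two_edge_cc :: "('a \<Rightarrow> 'a \<Rightarrow> bool) \<Rightarrow> 'a set \<Rightarrow> 'a set \<Rightarrow> bool" where
  "two_edge_cc E V W \<longleftrightarrow> W \<subseteq> V \<and> W \<noteq> {} \<and> connected_in E W \<and> bridgeless_in E W \<and>
     (\<forall>W'. W \<subset> W' \<and> W' \<subseteq> V \<longrightarrow> \<not> (connected_in E W' \<and> bridgeless_in E W'))"

definition Tset :: "('a \<Rightarrow> 'a \<Rightarrow> bool) \<Rightarrow> 'a set \<Rightarrow> 'a set \<Rightarrow> 'a \<Rightarrow> 'a set" where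
  "Tset E V W u = {v \<in> (V - W) \<union> {u}. dist_in E ((V - W) \<union> {u}) u v < \<infinity>}"

definition indeg_H :: "('a \<Rightarrow> 'a set) \<Rightarrow> 'a set \<Rightarrow> 'a \<Rightarrow> nat" where
  "indeg_H s W u = card {w \<in> W. u \<in> s w}"

definition outdeg_H :: "('a \<Rightarrow> 'a set) \<Rightarrow> 'a set \<Rightarrow> 'a \<Rightarrow> nat" where
  "outdeg_H s W u = card (s u \<inter> W)"

definition two_path :: "'a set \<Rightarrow> ('a \<Rightarrow> 'a set) \<Rightarrow> 'a set \<Rightarrow> (nat \<Rightarrow> 'a) \<Rightarrow> nat \<Rightarrow> bool" where
  "two_path V s W u k \<longleftrightarrow> inj_on u {0..k} \<and> u ` {0..k} \<subseteq> W \<and>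
     (\<forall>i<k. gadj V s (u i) (u (Suc i))) \<and>
     (\<forall>i. 0 < i \<and> i < k \<longrightarrow> indeg_H s W (u i) = 1 \<and> outdeg_H s W (u i) = 1)"

definition is_cycle :: "('a \<Rightarrow> 'a \<Rightarrow> bool) \<Rightarrow> 'a set \<Rightarrow> 'a list \<Rightarrow> bool" where
  "is_cycle E V c \<longleftrightarrow> walk_in E V c \<and> distinct c \<and> length c \<ge> 3 \<and> E (last c) (hd c)"

definition girth :: "('a \<Rightarrow> 'a \<Rightarrow> bool) \<Rightarrow> 'a set \<Rightarrow> enat" where
  "girth E V = (INF c \<in> {c. is_cycle E V c}. enat (length c))"

end

theory Submission
  imports Defs
begin

text \<open>Both before and after the 2-swap the distances from u i can be written down
  explicitly. Since H is a maximal bridgeless subgraph, the tree T(u j) of an inner vertex of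
  the 2-path meets the rest of G only in u j: any other edge would close an ear of H. So a
  vertex of T(u j) is reached from u i through u j, and a vertex outside the interior through
  u 0 or u k without entering the interior; the girth bound makes the 2-path a shortest
  connection between its own vertices. The swap moves T(u (i+1)) one step away from u i, brings T(u j) for j >= i+2 one
  step closer, and brings a vertex outside the interior one step closer exactly when a shortest
  route to it runs through u k, i.e. when x1 + k - i <= x2 + i.\<close>

section \<open>Distances in induced subgraphs\<close>

lemma enat_le_finite: "(a::enat) \<le> b \<Longrightarrow> b \<noteq> \<infinity> \<Longrightarrow> a \<noteq> \<infinity>"
  by (cases a) auto

lemma enat_the_enat: "a \<noteq> \<infinity> \<Longrightarrow> enat (the_enat a) = a"
  by auto

lemma enat_le_add_finite: "(a::enat) \<le> b + c \<Longrightarrow> b \<noteq> \<infinity> \<Longrightarrow> c \<noteq> \<infinity> \<Longrightarrow> a \<noteq> \<infinity>"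
  by (cases a; cases b; cases c) auto

lemma sum_enat_eq_infinity_iff:
  "finite S \<Longrightarrow> (\<Sum>x\<in>S. f x) = (\<infinity>::enat) \<longleftrightarrow> (\<exists>x\<in>S. f x = \<infinity>)"
  by (induction S rule: finite_induct) (auto simp: plus_eq_infty_iff_enat)

lemma min_add_le_plus_one:
  assumes "(a'::enat) \<le> a + 1" "(b'::enat) \<le> b + 1"
  shows "min (c + a') (d + b') \<le> min (c + a) (d + b) + 1"
proof (cases "c + a \<le> d + b")
  case True
  have "min (c + a') (d + b') \<le> c + (a + 1)" using add_left_mono[OF assms(1)] min.coboundedI1 by blast
  then show ?thesis using True by (simp add: min_def add.assoc)
next
  case False
  have "min (c + a') (d + b') \<le> d + (b + 1)" using add_left_mono[OF assms(2)] min.coboundedI2 by blast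
  then show ?thesis using False by (simp add: min_def add.assoc)
qed

lemma the_enat_min_diff:
  assumes "min p (enat (Suc q) + y) \<noteq> \<infinity>"
  shows "real (the_enat (min p (enat q + y))) - real (the_enat (min p (enat (Suc q) + y)))
    = (if enat (Suc q) + y \<le> p then -1 else 0)"
  using assms by (cases p; cases y) (auto simp: min_def)

lemma last_take_Suc: "n < length p \<Longrightarrow> last (take (Suc n) p) = p ! n"
  by (simp add: take_Suc_conv_app_nth)

lemma walk_in_singleton [simp]: "walk_in E W [x] \<longleftrightarrow> x \<in> W"
  unfolding walk_in_def by auto

lemma walk_in_append:
  assumes "walk_in E W p" "walk_in E W q" "E (last p) (hd q)"
  shows "walk_in E W (p @ q)"
  unfolding walk_in_def
proof (intro conjI allI impI)
  show "p @ q \<noteq> []" "set (p @ q) \<subseteq> W" using assms unfolding walk_in_def by auto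
  fix t assume t: "Suc t < length (p @ q)"
  have p: "p \<noteq> []" "\<And>t. Suc t < length p \<Longrightarrow> E (p ! t) (p ! Suc t)"
    and q: "q \<noteq> []" "\<And>t. Suc t < length q \<Longrightarrow> E (q ! t) (q ! Suc t)"
    using assms(1,2) unfolding walk_in_def by auto
  consider "Suc t < length p" | "Suc t = length p" | "length p \<le> t" by linarith
  then show "E ((p @ q) ! t) ((p @ q) ! Suc t)"
  proof cases
    case 2
    then have "t = length p - 1" by simp
    then show ?thesis using assms(3) p(1) q(1) 2
      by (simp add: nth_append last_conv_nth hd_conv_nth)
  next
    case 3
    then have "Suc (t - length p) < length q" "Suc t - length p = Suc (t - length p)" using t by auto
    then show ?thesis using 3 q(2) by (simp add: nth_append)
  qed (simp add: nth_append p(2))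
qed

lemma walk_in_take:
  "walk_in E W p \<Longrightarrow> 0 < n \<Longrightarrow> walk_in E W (take n p)"
  unfolding walk_in_def by (auto dest: in_set_takeD)

lemma walk_in_drop:
  "walk_in E W p \<Longrightarrow> n < length p \<Longrightarrow> walk_in E W (drop n p)"
  unfolding walk_in_def by (auto dest: in_set_dropD)

lemma walk_in_rev:
  assumes sym: "\<And>a b. E a b \<Longrightarrow> E b a" and p: "walk_in E W p"
  shows "walk_in E W (rev p)"
  unfolding walk_in_def
proof (intro conjI allI impI)
  show "rev p \<noteq> []" "set (rev p) \<subseteq> W" using p unfolding walk_in_def by auto
  fix t assume t: "Suc t < length (rev p)"
  define j where "j = length p - 2 - t"
  have j: "Suc j < length p" "rev p ! t = p ! Suc j" "rev p ! Suc t = p ! j"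
    using t unfolding j_def by (auto simp: rev_nth Suc_diff_Suc numeral_2_eq_2)
  show "E (rev p ! t) (rev p ! Suc t)" using p j sym unfolding walk_in_def by simp
qed

lemma distinct_walk_edge_unique:
  assumes "distinct p" "Suc t1 < length p" "Suc t2 < length p"
    and "{p ! t1, p ! Suc t1} = {p ! t2, p ! Suc t2}"
  shows "t1 = t2"
  using assms by (auto simp: doubleton_eq_iff nth_eq_iff_index_eq)

lemma dist_in_le_walk:
  "walk_in E W p \<Longrightarrow> hd p = x \<Longrightarrow> last p = y \<Longrightarrow> dist_in E W x y \<le> enat (length p - 1)"
  unfolding dist_in_def by (rule INF_lower) auto

lemma dist_in_finite_walk:
  "walk_in E W p \<Longrightarrow> hd p = x \<Longrightarrow> last p = y \<Longrightarrow> dist_in E W x y \<noteq> \<infinity>"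
  by (metis dist_in_le_walk infinity_ileE)

lemma dist_in_attained:
  assumes "dist_in E W x y = enat n"
  obtains p where "walk_in E W p" "hd p = x" "last p = y" "length p = Suc n"
proof -
  let ?S = "{p. walk_in E W p \<and> hd p = x \<and> last p = y}"
  let ?f = "\<lambda>p. enat (length p - 1)"
  have "?S \<noteq> {}"
  proof
    assume "?S = {}"
    then have "dist_in E W x y = \<infinity>" unfolding dist_in_def by (simp add: Inf_enat_def)
    with assms show False by simp
  qed
  then have "Inf (?f ` ?S) \<in> ?f ` ?S"
    unfolding Inf_enat_def by (auto intro: LeastI)
  then obtain p where "p \<in> ?S" "?f p = enat n"
    using assms unfolding dist_in_def by auto
  moreover from this have "p \<noteq> []" by (simp add: walk_in_def)
  ultimately show ?thesis using that by auto
qed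

lemma dist_in_refl: "x \<in> W \<Longrightarrow> dist_in E W x x = 0"
  using dist_in_le_walk[of E W "[x]" x x] by (simp add: zero_enat_def[symmetric])

lemma dist_in_zero: "dist_in E W x y = 0 \<Longrightarrow> y = x"
  by (erule dist_in_attained[where n = 0, folded zero_enat_def]) (auto simp: length_Suc_conv)

lemma dist_in_last_in: "dist_in E W x y \<noteq> \<infinity> \<Longrightarrow> y \<in> W"
proof -
  assume "dist_in E W x y \<noteq> \<infinity>"
  then obtain p where "walk_in E W p" "last p = y"
    by (metis dist_in_attained not_infinity_eq)
  then show "y \<in> W" unfolding walk_in_def using last_in_set by blast
qed

lemma dist_in_edge:
  assumes "E z y" "y \<in> W"
  shows "dist_in E W x y \<le> dist_in E W x z + 1"
proof (cases "dist_in E W x z")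
  case (enat n)
  then obtain p where p: "walk_in E W p" "hd p = x" "last p = z" "length p = Suc n"
    by (rule dist_in_attained)
  have "walk_in E W (p @ [y])"
    using p assms by (intro walk_in_append) auto
  then have "dist_in E W x y \<le> enat (length (p @ [y]) - 1)"
    by (rule dist_in_le_walk) (use p in \<open>auto simp: hd_append\<close>)
  then show ?thesis using enat p by (simp add: one_enat_def)
qed simp

lemma dist_in_pred:
  assumes "dist_in E W x y = enat (Suc n)"
  obtains z where "z \<in> W" "E z y" "dist_in E W x z = enat n"
proof -
  obtain p where p: "walk_in E W p" "hd p = x" "last p = y" "length p = Suc (Suc n)"
    using assms by (rule dist_in_attained)
  let ?q = "take (Suc n) p" and ?z = "p ! n"
  have q: "walk_in E W ?q" "hd ?q = x" "last ?q = ?z" "length ?q = Suc n"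
    using p walk_in_take[OF p(1), of "Suc n"] by (auto simp: last_take_Suc)
  have zy: "E ?z y" "?z \<in> W"
    using p unfolding walk_in_def by (auto simp: last_conv_nth)
  have "dist_in E W x ?z \<le> enat n"
    using dist_in_le_walk[OF q(1-3)] q(4) by simp
  moreover have "y \<in> W" using assms dist_in_last_in by (metis enat.distinct(2))
  then have "enat (Suc n) \<le> dist_in E W x ?z + 1"
    using dist_in_edge[where E = E and z = ?z and W = W and x = x, OF zy(1)] assms by simp
  ultimately have "dist_in E W x ?z = enat n"
    by (cases "dist_in E W x ?z") (auto simp: one_enat_def)
  with zy show ?thesis using that by blast
qed

lemma dist_in_pred_le:
  assumes "dist_in E W x y \<noteq> \<infinity>" "y \<noteq> x"
  obtains z where "z \<in> W" "E z y" "dist_in E W x z + 1 \<le> dist_in E W x y"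
proof -
  obtain n where n: "dist_in E W x y = enat n" using assms(1) by auto
  with assms(2) dist_in_zero[of E W x y] have "n \<noteq> 0" by (auto simp: zero_enat_def)
  then obtain m where "n = Suc m" using not0_implies_Suc by blast
  with n obtain z where "z \<in> W" "E z y" "dist_in E W x z = enat m" by (auto elim: dist_in_pred)
  then show ?thesis using that n \<open>n = Suc m\<close> by (simp add: one_enat_def)
qed

lemma dist_in_sym:
  assumes "\<And>a b. E a b \<Longrightarrow> E b a"
  shows "dist_in E W x y = dist_in E W y x"
proof -
  have le: "dist_in E W a b \<le> dist_in E W b a" for a b
  proof (cases "dist_in E W b a")
    case (enat n)
    then obtain p where p: "walk_in E W p" "hd p = b" "last p = a" "length p = Suc n"
      by (rule dist_in_attained)
    then have "dist_in E W a b \<le> enat (length (rev p) - 1)"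
      by (intro dist_in_le_walk walk_in_rev[OF assms]) (auto simp: hd_rev last_rev)
    then show ?thesis using enat p by simp
  qed simp
  show ?thesis using le[of x y] le[of y x] by simp
qed

lemma dist_in_mono:
  assumes "W \<subseteq> W'" "\<And>a b. a \<in> W \<Longrightarrow> b \<in> W \<Longrightarrow> E a b \<Longrightarrow> E' a b"
  shows "dist_in E' W' x y \<le> dist_in E W x y"
  unfolding dist_in_def
proof (rule INF_mono)
  fix p assume "p \<in> {p. walk_in E W p \<and> hd p = x \<and> last p = y}"
  then have "p \<in> {p. walk_in E' W' p \<and> hd p = x \<and> last p = y}"
    using assms unfolding walk_in_def by (auto simp: subset_iff)
  then show "\<exists>q\<in>{p. walk_in E' W' p \<and> hd p = x \<and> last p = y}. enat (length q - 1) \<le> enat (length p - 1)"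
    by blast
qed

lemma dist_in_triangle:
  assumes "y \<in> W"
  shows "dist_in E W x z \<le> dist_in E W x y + dist_in E W y z"
proof (cases "dist_in E W y z")
  case (enat n)
  then show ?thesis
  proof (induction n arbitrary: z)
    case 0
    then show ?case using dist_in_zero[of E W y z] by (simp add: zero_enat_def)
  next
    case (Suc n)
    obtain w where w: "w \<in> W" "E w z" "dist_in E W y w = enat n"
      using Suc.prems by (rule dist_in_pred)
    have "z \<in> W" using dist_in_last_in Suc.prems by (metis enat.distinct(2))
    then have "dist_in E W x z \<le> dist_in E W x w + 1" using w(2) by (rule dist_in_edge[rotated])
    also have "\<dots> \<le> dist_in E W x y + enat n + 1"
      using Suc.IH[OF w(3)] w(3) by (simp add: add_right_mono)
    finally show ?case using Suc.prems by (simp add: one_enat_def add.assoc)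
  qed
qed simp

lemma shortest_walk_distinct:
  assumes d: "dist_in E W x y = enat n"
    and p: "walk_in E W p" "hd p = x" "last p = y" "length p = Suc n"
  shows "distinct p"
proof (rule ccontr)
  assume "\<not> distinct p"
  then obtain a b where ab: "a < b" "b < length p" "p ! a = p ! b"
    unfolding distinct_conv_nth by (metis linorder_neqE_nat)
  have pa: "walk_in E W (take (Suc a) p)" "walk_in E W (drop (Suc b) p)" if "Suc b < length p"
    using p(1) ab that by (auto intro: walk_in_take walk_in_drop)
  have last_take: "last (take (Suc a) p) = p ! a"
    using ab by (simp add: last_take_Suc)
  have short: "walk_in E W (take (Suc a) p @ drop (Suc b) p) \<and>
      hd (take (Suc a) p @ drop (Suc b) p) = x \<and> last (take (Suc a) p @ drop (Suc b) p) = y"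
  proof (cases "Suc b < length p")
    case True
    have "E (p ! a) (p ! Suc b)" using p(1) ab True unfolding walk_in_def by auto
    then have "walk_in E W (take (Suc a) p @ drop (Suc b) p)"
      using pa[OF True] ab True
      by (intro walk_in_append) (auto simp: last_take hd_drop_conv_nth)
    then show ?thesis using p True ab by (auto simp: hd_append)
  next
    case False
    then have "b = length p - 1" "p \<noteq> []" using ab by auto
    then have "drop (Suc b) p = []" "last p = p ! a" using ab by (auto simp: last_conv_nth)
    then show ?thesis using walk_in_take[OF p(1), of "Suc a"] p ab
      by (auto simp: last_take)
  qed
  have "dist_in E W x y \<le> enat (length (take (Suc a) p @ drop (Suc b) p) - 1)"
    using short by (intro dist_in_le_walk) auto
  with d ab p(4) show False by simp
qed

lemma connected_in_mono:
  "connected_in E W \<Longrightarrow> (\<And>a b. a \<in> W \<Longrightarrow> b \<in> W \<Longrightarrow> E a b \<Longrightarrow> F a b) \<Longrightarrow> connected_in F W"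
  unfolding connected_in_def using dist_in_mono[where W = W and W' = W and E = E and E' = F]
  by (meson order.strict_trans1 order_refl)

lemma connected_in_from_root:
  assumes sym: "\<And>a b. E a b \<Longrightarrow> E b a" and "r \<in> W"
    and reach: "\<And>z. z \<in> W \<Longrightarrow> dist_in E W r z \<noteq> \<infinity>"
  shows "connected_in E W"
  unfolding connected_in_def
proof (intro ballI)
  fix x y assume "x \<in> W" "y \<in> W"
  obtain m n where "dist_in E W r x = enat m" "dist_in E W r y = enat n"
    using reach \<open>x \<in> W\<close> \<open>y \<in> W\<close> by blast
  moreover have "dist_in E W x y \<le> dist_in E W r x + dist_in E W r y"
    using dist_in_triangle[OF \<open>r \<in> W\<close>, where E = E and x = x and z = y]
      dist_in_sym[OF sym, where W = W and x = x and y = r] by simp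
  ultimately show "dist_in E W x y < \<infinity>"
    by (metis enat_ord_simps(4) infinity_ileE plus_enat_simps(1))
qed

lemma potential_le_dist_in:
  assumes f0: "f a = 0"
    and lip: "\<And>x y. x \<in> W \<Longrightarrow> y \<in> W \<Longrightarrow> E x y \<Longrightarrow> f y \<le> f x + 1"
    and zW: "z \<in> W"
  shows "f z \<le> dist_in E W a z"
proof (cases "dist_in E W a z")
  case (enat n)
  then show ?thesis using zW
  proof (induction n arbitrary: z)
    case 0
    then show ?case using dist_in_zero[of E W a z] f0 by (simp add: zero_enat_def)
  next
    case (Suc n)
    obtain w where w: "w \<in> W" "E w z" "dist_in E W a w = enat n"
      using Suc.prems(1) by (rule dist_in_pred)
    have "f z \<le> f w + 1" by (rule lip[OF w(1) Suc.prems(2) w(2)])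
    also have "\<dots> \<le> enat n + 1" using Suc.IH[OF w(3) w(1)] w(3) by (simp add: add_right_mono)
    finally show ?case using Suc.prems by (simp add: one_enat_def)
  qed
qed simp

lemma dist_in_le_potential:
  assumes aW: "a \<in> W"
    and pred: "\<And>z. z \<in> W \<Longrightarrow> z \<noteq> a \<Longrightarrow> f z \<noteq> \<infinity> \<Longrightarrow> \<exists>x\<in>W. E x z \<and> f x + 1 \<le> f z"
    and zW: "z \<in> W"
  shows "dist_in E W a z \<le> f z"
proof (cases "f z")
  case (enat m)
  then show ?thesis using zW
  proof (induction m arbitrary: z rule: less_induct)
    case (less m)
    show ?case
    proof (cases "z = a")
      case True
      then show ?thesis using dist_in_refl[OF aW] by simp
    next
      case False
      obtain x where x: "x \<in> W" "E x z" "f x + 1 \<le> f z"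
        using pred[OF less.prems(2) False] less.prems(1) by auto
      then obtain m' where m': "f x = enat m'" "m' < m"
        using less.prems(1) by (cases "f x") (auto simp: one_enat_def)
      have "dist_in E W a z \<le> dist_in E W a x + 1"
        by (rule dist_in_edge[where E = E, OF x(2) less.prems(2)])
      also have "\<dots> \<le> f x + 1"
        using less.IH[OF m'(2) m'(1) x(1)] by (simp add: add_right_mono)
      finally show ?thesis using x(3) by simp
    qed
  qed
qed simp

lemma girth_le_cycle: "is_cycle E V c \<Longrightarrow> girth E V \<le> enat (length c)"
  unfolding girth_def by (rule INF_lower) simp

section \<open>Ears and 2-edge-connected components\<close>

lemma ear_minus_edge_reaches_end:
  fixes E :: "'a \<Rightarrow> 'a \<Rightarrow> bool" and a b :: 'a
  defines "F \<equiv> \<lambda>c d. E c d \<and> {c, d} \<noteq> {a, b}"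
  assumes p: "walk_in E U p" "distinct p" and y: "y \<notin> set p" "E (last p) y"
    and W': "set p \<subseteq> W'" "y \<in> W'" and m: "m < length p"
  shows "dist_in F W' (hd p) (p ! m) \<noteq> \<infinity> \<or> dist_in F W' (p ! m) y \<noteq> \<infinity>"
proof (cases "\<exists>t<m. {p ! t, p ! Suc t} = {a, b}")
  case False
  have pE: "\<And>t. Suc t < length p \<Longrightarrow> E (p ! t) (p ! Suc t)"
    using p(1) unfolding walk_in_def by auto
  have "walk_in F W' (take (Suc m) p)"
    unfolding walk_in_def using False m pE W'(1) by (auto simp: F_def dest: in_set_takeD)
  from dist_in_finite_walk[OF this] show ?thesis using m by (simp add: last_take_Suc)
next
  case True
  then obtain t0 where t0: "t0 < m" "{p ! t0, p ! Suc t0} = {a, b}" by blast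
  let ?q = "drop m p @ [y]"
  have "walk_in F W' ?q"
    unfolding walk_in_def
  proof (intro conjI allI impI)
    show "?q \<noteq> []" "set ?q \<subseteq> W'" using W' by (auto dest: in_set_dropD)
    fix t assume t: "Suc t < length ?q"
    show "F (?q ! t) (?q ! Suc t)"
    proof (cases "Suc (m + t) < length p")
      case True
      have "m + t \<noteq> t0" using t0 by simp
      then have "{p ! (m + t), p ! Suc (m + t)} \<noteq> {a, b}"
        using distinct_walk_edge_unique[OF p(2) True, of t0] t0 m by auto
      moreover have "?q ! t = p ! (m + t)" "?q ! Suc t = p ! Suc (m + t)"
        using True by (auto simp: nth_append)
      ultimately show ?thesis using True p(1) unfolding walk_in_def F_def by simp
    next
      case False
      then have "m + t = length p - 1" using t by simp
      moreover have "p \<noteq> []" using m by auto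
      ultimately have "?q ! t = last p" "?q ! Suc t = y"
        using t m by (auto simp: nth_append last_conv_nth)
      moreover have "y \<notin> {a, b}" using t0 m y(1) by (auto simp flip: t0(2))
      ultimately show ?thesis using y(2) by (auto simp: F_def)
    qed
  qed
  from dist_in_finite_walk[OF this] show ?thesis using m by (simp add: hd_drop_conv_nth)
qed

lemma connected_minus_edge_add_ear:
  fixes E :: "'a \<Rightarrow> 'a \<Rightarrow> bool" and a b :: 'a
  defines "F \<equiv> \<lambda>c d. E c d \<and> {c, d} \<noteq> {a, b}"
  assumes sym: "\<And>c d. E c d \<Longrightarrow> E d c" and conn: "connected_in F W"
    and p: "walk_in E U p" "distinct p" "hd p \<in> W"
    and y: "y \<in> W" "y \<notin> set p" "E (last p) y"
  shows "connected_in F (W \<union> set p)"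
proof (rule connected_in_from_root)
  let ?W' = "W \<union> set p"
  show Fsym: "F c d \<Longrightarrow> F d c" for c d
    using sym unfolding F_def by (auto simp: insert_commute)
  show "hd p \<in> ?W'" using p(3) by simp
  have from_W: "dist_in F ?W' (hd p) z \<noteq> \<infinity>" if "z \<in> W" for z
  proof -
    have "dist_in F ?W' (hd p) z \<le> dist_in F W (hd p) z"
      by (rule dist_in_mono) auto
    moreover have "dist_in F W (hd p) z < \<infinity>"
      using conn p(3) that unfolding connected_in_def by blast
    ultimately show ?thesis by (metis enat_ord_simps(4) order.strict_trans1)
  qed
  have from_p: "dist_in F ?W' (hd p) (p ! m) \<noteq> \<infinity>" if m: "m < length p" for m
  proof -
    have "dist_in F ?W' (hd p) (p ! m) \<le> dist_in F ?W' (hd p) y + dist_in F ?W' y (p ! m)"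
      using y(1) by (intro dist_in_triangle) simp
    moreover have "dist_in F ?W' (hd p) (p ! m) \<noteq> \<infinity> \<or> dist_in F ?W' (p ! m) y \<noteq> \<infinity>"
      unfolding F_def using p(1,2) y m by (intro ear_minus_edge_reaches_end) auto
    ultimately show ?thesis
      using from_W[OF y(1)] dist_in_sym[of F ?W' y "p ! m", OF Fsym] enat_le_add_finite by metis
  qed
  fix z assume "z \<in> ?W'"
  then show "dist_in F ?W' (hd p) z \<noteq> \<infinity>"
    using from_W from_p by (auto simp: in_set_conv_nth)
qed

lemma connected_bridgeless_add_ear:
  assumes sym: "\<And>c d. E c d \<Longrightarrow> E d c" and "connected_in E W" "bridgeless_in E W"
    and p: "walk_in E U p" "distinct p" "hd p \<in> W"
    and y: "y \<in> W" "y \<notin> set p" "E (last p) y"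
  shows "connected_in E (W \<union> set p) \<and> bridgeless_in E (W \<union> set p)"
proof -
  have minus: "connected_in (\<lambda>c d. E c d \<and> {c, d} \<noteq> {a, b}) (W \<union> set p)" for a b
  proof (rule connected_minus_edge_add_ear[OF sym _ p y])
    show "connected_in (\<lambda>c d. E c d \<and> {c, d} \<noteq> {a, b}) W"
    proof (cases "a \<in> W \<and> b \<in> W \<and> E a b")
      case True
      then show ?thesis using assms(3) unfolding bridgeless_in_def by blast
    next
      case False
      show ?thesis using assms(2)
        by (rule connected_in_mono) (use False sym in \<open>auto simp: doubleton_eq_iff\<close>)
    qed
  qed
  show ?thesis
    using minus connected_in_mono[OF minus] unfolding bridgeless_in_def by blast
qed

locale two_edge_component =
  fixes E :: "'a \<Rightarrow> 'a \<Rightarrow> bool" and V W :: "'a set"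
  assumes sym: "E a b \<Longrightarrow> E b a"
    and edge_in_V: "E a b \<Longrightarrow> a \<in> V"
    and component: "two_edge_cc E V W"
begin

lemma W_subset_V: "W \<subseteq> V"
  using component unfolding two_edge_cc_def by blast

lemma Tset_iff:
  "z \<in> Tset E V W w \<longleftrightarrow> z \<in> (V - W) \<union> {w} \<and> dist_in E ((V - W) \<union> {w}) w z \<noteq> \<infinity>"
  unfolding Tset_def by auto

lemma root_in_Tset: "w \<in> Tset E V W w"
  unfolding Tset_iff by (simp add: dist_in_refl)

lemma Tset_inter_W: "z \<in> Tset E V W w \<Longrightarrow> z \<in> W \<Longrightarrow> z = w"
  unfolding Tset_iff by auto

lemma Tset_subset_V: "w \<in> V \<Longrightarrow> Tset E V W w \<subseteq> V"
  unfolding Tset_def by auto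

lemma Tset_extend:
  assumes "z \<in> Tset E V W w" "E z y" "y \<notin> W"
  shows "y \<in> Tset E V W w"
proof -
  have y: "y \<in> (V - W) \<union> {w}" using assms edge_in_V sym by blast
  have "dist_in E ((V - W) \<union> {w}) w y \<le> dist_in E ((V - W) \<union> {w}) w z + 1"
    by (rule dist_in_edge[where E = E, OF assms(2) y])
  moreover have "dist_in E ((V - W) \<union> {w}) w z \<noteq> \<infinity>" using assms(1) Tset_iff by blast
  ultimately have "dist_in E ((V - W) \<union> {w}) w y \<noteq> \<infinity>"
    using enat_le_add_finite i1_ne_infinity by blast
  then show ?thesis using y unfolding Tset_iff by blast
qed

text \<open>An edge from another vertex of T(w) into W would close an ear of W, contradicting
  its maximality.\<close>
lemma Tset_attached_at_root:
  assumes w: "w \<in> W" and x: "x \<in> Tset E V W w" "x \<noteq> w" and y: "E x y" "y \<in> W"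
  shows "y = w"
proof (rule ccontr)
  assume "y \<noteq> w"
  let ?R = "(V - W) \<union> {w}"
  obtain n where n: "dist_in E ?R w x = enat n" using x(1) unfolding Tset_iff by auto
  obtain p where p: "walk_in E ?R p" "hd p = w" "last p = x" "length p = Suc n"
    using n by (rule dist_in_attained)
  have distinct: "distinct p" by (rule shortest_walk_distinct[OF n p])
  have "set p \<subseteq> ?R" using p(1) unfolding walk_in_def by blast
  then have p_V: "set p \<subseteq> V" and "y \<notin> set p" using w W_subset_V y(2) \<open>y \<noteq> w\<close> by auto
  have "p \<noteq> []" using p(4) by auto
  then have "x \<in> set p" using p(3) last_in_set by blast
  moreover have "x \<notin> W" using x unfolding Tset_iff by auto
  ultimately have larger: "W \<subset> W \<union> set p" by blast
  have "connected_in E W" "bridgeless_in E W"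
    using component unfolding two_edge_cc_def by auto
  from connected_bridgeless_add_ear[OF sym this p(1) distinct] p(2,3) w y \<open>y \<notin> set p\<close>
  have "connected_in E (W \<union> set p) \<and> bridgeless_in E (W \<union> set p)" by blast
  with larger p_V W_subset_V component show False unfolding two_edge_cc_def by blast
qed

lemma Tset_disjoint:
  assumes "w \<in> W" "w' \<in> W" "w \<noteq> w'"
  shows "Tset E V W w \<inter> Tset E V W w' = {}"
proof -
  let ?R = "(V - W) \<union> {w'}"
  have "z \<notin> Tset E V W w" if "dist_in E ?R w' z = enat n" for n z
    using that
  proof (induction n arbitrary: z)
    case 0
    then have "z = w'" using dist_in_zero[of E ?R w' z] by (simp add: zero_enat_def)
    then show ?case using Tset_inter_W assms by blast
  next
    case (Suc n)
    obtain y where y: "y \<in> ?R" "E y z" "dist_in E ?R w' y = enat n"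
      using Suc.prems by (rule dist_in_pred)
    have "z \<noteq> w'" using Suc.prems dist_in_refl[where x = w' and W = ?R and E = E] by (auto simp: zero_enat_def)
    then have "z \<notin> W" using dist_in_last_in[of E ?R w' z] Suc.prems by auto
    show ?case
    proof
      assume z: "z \<in> Tset E V W w"
      show False
      proof (cases "y \<in> W")
        case True
        then have "y = w'" "y = w"
          using y(1) Tset_attached_at_root[OF assms(1) z _ sym[OF y(2)]] \<open>z \<notin> W\<close> assms(1) by auto
        then show False using assms(3) by simp
      next
        case False
        then show False using Suc.IH[OF y(3)] Tset_extend[OF z sym[OF y(2)]] by simp
      qed
    qed
  qed
  moreover have "\<exists>n. dist_in E ?R w' z = enat n" if "z \<in> Tset E V W w'" for z
    using that unfolding Tset_iff by simp
  ultimately show ?thesis by blast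
qed

end

section \<open>The network creation game\<close>

lemma gadj_sym: "gadj V s a b \<Longrightarrow> gadj V s b a"
  unfolding gadj_def by auto

lemma gadj_in_V: "gadj V s a b \<Longrightarrow> a \<in> V"
  unfolding gadj_def by auto

text \<open>A player who buys every link has finite cost, so in equilibrium every cost is finite.\<close>
lemma nash_equilibrium_connected:
  assumes "finite V" and NE: "nash_equilibrium \<alpha> V s"
  shows "connected_in (gadj V s) V"
  unfolding connected_in_def
proof (intro ballI)
  fix x y assume x: "x \<in> V" and y: "y \<in> V"
  let ?s = "s(x := V - {x})"
  have "dist_in (gadj V ?s) V x v \<noteq> \<infinity>" if "v \<in> V - {x}" for v
  proof -
    have "dist_in (gadj V ?s) V x v \<le> 1"
      using dist_in_edge[where E = "gadj V ?s" and z = x and y = v and W = V and x = x] x that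
      by (simp add: gadj_def dist_in_refl)
    then show ?thesis by (rule enat_le_finite) simp
  qed
  then have "(\<Sum>v\<in>V - {x}. dist_in (gadj V ?s) V x v) \<noteq> \<infinity>"
    using assms(1) by (simp add: sum_enat_eq_infinity_iff)
  then have "cost \<alpha> V ?s x \<noteq> \<infinity>" unfolding cost_def by auto
  moreover have "cost \<alpha> V s x \<le> cost \<alpha> V ?s x"
    using NE x unfolding nash_equilibrium_def by blast
  ultimately have "cost \<alpha> V s x \<noteq> \<infinity>" by auto
  then have "(\<Sum>v\<in>V - {x}. dist_in (gadj V s) V x v) \<noteq> \<infinity>"
    unfolding cost_def by auto
  then have "dist_in (gadj V s) V x y \<noteq> \<infinity>" if "y \<noteq> x"
    using that y assms(1) by (auto simp: sum_enat_eq_infinity_iff)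
  then show "dist_in (gadj V s) V x y < \<infinity>"
    using x by (cases "y = x") (auto simp: dist_in_refl)
qed

lemma cost_eq_real:
  assumes "finite V" and fin: "\<And>v. v \<in> V - {x} \<Longrightarrow> dist_in (gadj V s) V x v \<noteq> \<infinity>"
  shows "cost \<alpha> V s x = ereal (\<alpha> * real (card (s x))
           + (\<Sum>v\<in>V - {x}. real (the_enat (dist_in (gadj V s) V x v))))"
proof -
  have "(\<Sum>v\<in>V - {x}. dist_in (gadj V s) V x v) = (\<Sum>v\<in>V - {x}. enat (the_enat (dist_in (gadj V s) V x v)))"
    using fin by (simp add: enat_the_enat)
  also have "\<dots> = enat (\<Sum>v\<in>V - {x}. the_enat (dist_in (gadj V s) V x v))"
    by (simp add: of_nat_eq_enat[symmetric])
  finally show ?thesis unfolding cost_def by simp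
qed

section \<open>Distances from u i before and after the swap\<close>

locale two_path_swap = two_edge_component "gadj V s" V W
  for V :: "'a set" and s :: "'a \<Rightarrow> 'a set" and W :: "'a set" +
  fixes u :: "nat \<Rightarrow> 'a" and k i :: nat
  assumes finite_V: "finite V"
    and strategy: "strategy_vector V s"
    and connected: "connected_in (gadj V s) V"
    and path: "two_path V s W u k"
    and orient: "\<forall>j<k. u (Suc j) \<in> s (u j)"
    and girth: "enat (2 * k) \<le> girth (gadj V s) V"
    and i_le: "i + 2 \<le> k"
begin

abbreviation "E \<equiv> gadj V s"

abbreviation "T j \<equiv> Tset E V W (u j)"

abbreviation "Pbar \<equiv> \<Union>j\<in>{0<..<k}. T j"

abbreviation "Q \<equiv> V - Pbar"

lemma u_in_W: "j \<le> k \<Longrightarrow> u j \<in> W"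
  using path unfolding two_path_def by auto

lemma u_in_V: "j \<le> k \<Longrightarrow> u j \<in> V"
  using u_in_W W_subset_V by blast

lemma u_eq_iff: "j \<le> k \<Longrightarrow> l \<le> k \<Longrightarrow> u j = u l \<longleftrightarrow> j = l"
  using path unfolding two_path_def inj_on_def by auto

lemma path_edge: "j < k \<Longrightarrow> E (u j) (u (Suc j))"
  using orient u_in_V[of j] u_in_V[of "Suc j"] unfolding gadj_def by auto

lemma arcs_inner:
  assumes "0 < j" "j < k"
  shows "s (u j) \<inter> W = {u (Suc j)}" "{w \<in> W. u j \<in> s w} = {u (j - 1)}"
proof -
  have deg: "outdeg_H s W (u j) = 1" "indeg_H s W (u j) = 1"
    using path assms unfolding two_path_def by auto
  have "u (Suc j) \<in> s (u j) \<inter> W" "u (j - 1) \<in> {w \<in> W. u j \<in> s w}"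
    using orient[rule_format, of j] orient[rule_format, of "j - 1"] u_in_W[of "Suc j"] u_in_W[of "j - 1"] assms
    by auto
  then show "s (u j) \<inter> W = {u (Suc j)}" "{w \<in> W. u j \<in> s w} = {u (j - 1)}"
    using deg unfolding outdeg_H_def indeg_H_def by (metis card_1_singletonE singletonD)+
qed

lemma neighbour_in_W:
  assumes "0 < j" "j < k" "y \<in> W" "E (u j) y"
  shows "y = u (j - 1) \<or> y = u (Suc j)"
  using assms(3,4) arcs_inner[OF assms(1,2)] unfolding gadj_def by blast

lemma walk_along_path:
  assumes "a \<le> b" "b \<le> k"
  shows "walk_in E V (map u [a..<Suc b])"
  unfolding walk_in_def
proof (intro conjI allI impI)
  show "map u [a..<Suc b] \<noteq> []" "set (map u [a..<Suc b]) \<subseteq> V"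
    using assms u_in_V by auto
  fix t assume "Suc t < length (map u [a..<Suc b])"
  then show "E (map u [a..<Suc b] ! t) (map u [a..<Suc b] ! Suc t)"
    using path_edge[of "a + t"] assms by (simp add: nth_map_upt del: upt_Suc)
qed

lemma distinct_path: "b \<le> Suc k \<Longrightarrow> distinct (map u [a..<b])"
  by (simp add: distinct_map inj_on_def u_eq_iff)

lemma u_in_T_iff: "a \<le> k \<Longrightarrow> j \<le> k \<Longrightarrow> u a \<in> T j \<longleftrightarrow> a = j"
  using Tset_inter_W[of "u a" "u j"] u_in_W u_eq_iff root_in_Tset by auto

lemma T_disjoint: "j \<le> k \<Longrightarrow> l \<le> k \<Longrightarrow> j \<noteq> l \<Longrightarrow> T j \<inter> T l = {}"
  using Tset_disjoint u_in_W u_eq_iff by simp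

lemma T_closed:
  assumes j: "0 < j" "j < k" and z: "z \<in> T j" and "E z y"
  shows "y \<in> T j \<or> (z = u j \<and> (y = u (j - 1) \<or> y = u (Suc j)))"
proof (cases "y \<in> W")
  case False
  then show ?thesis using Tset_extend[OF z \<open>E z y\<close>] by simp
next
  case True
  show ?thesis
  proof (cases "z = u j")
    case True
    then show ?thesis using neighbour_in_W[OF j \<open>y \<in> W\<close>] \<open>E z y\<close> by simp
  next
    case False
    then have "y = u j"
      using Tset_attached_at_root[OF u_in_W z False \<open>E z y\<close> \<open>y \<in> W\<close>] j by simp
    then show ?thesis using root_in_Tset by simp
  qed
qed

lemma u_in_Pbar_iff: "j \<le> k \<Longrightarrow> u j \<in> Pbar \<longleftrightarrow> 0 < j \<and> j < k"
  using u_in_T_iff by auto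

lemma Pbar_subset_V: "Pbar \<subseteq> V"
  by (intro UN_least) (simp add: Tset_subset_V u_in_V)

lemma dist_Q_ends: "enat k \<le> dist_in E Q (u 0) (u k)"
proof (cases "dist_in E Q (u 0) (u k)")
  case (enat d)
  obtain p where p: "walk_in E Q p" "hd p = u 0" "last p = u k" "length p = Suc d"
    using enat by (rule dist_in_attained)
  have "d \<noteq> 0"
    using p u_eq_iff[of 0 k] i_le by (auto simp: length_Suc_conv)
  let ?rest = "rev (map u [1..<Suc (k - 1)])"
  have rest: "walk_in E V ?rest" "hd ?rest = u (k - 1)" "last ?rest = u 1"
    using walk_in_rev[OF sym walk_along_path[of 1 "k - 1"]] i_le
    by (auto simp: hd_rev last_rev hd_map last_map simp del: upt_Suc)
  have "walk_in E V p" using p(1) unfolding walk_in_def by auto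
  then have "walk_in E V (p @ ?rest)"
    using rest p(3) path_edge[of "k - 1"] sym i_le by (intro walk_in_append) auto
  moreover have "distinct (p @ ?rest)"
  proof -
    have "set ?rest \<subseteq> Pbar" "set p \<subseteq> Q" using p(1) u_in_Pbar_iff i_le
      unfolding walk_in_def by auto
    then show ?thesis
      using shortest_walk_distinct[OF enat p] distinct_path[of "Suc (k - 1)" 1] i_le by auto
  qed
  moreover have "E (last (p @ ?rest)) (hd (p @ ?rest))"
    using rest p path_edge[of 0] sym i_le by (auto simp: walk_in_def)
  moreover have "length (p @ ?rest) = d + k" using p(4) i_le by simp
  ultimately have "girth E V \<le> enat (d + k)"
    using \<open>d \<noteq> 0\<close> i_le girth_le_cycle[of E V "p @ ?rest"] unfolding is_cycle_def by simp
  with girth have "enat (2 * k) \<le> enat (d + k)" by (rule order.trans)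
  then show ?thesis using enat by simp
qed simp

lemma no_chord: "\<not> E (u i) (u (i + 2))"
proof
  assume chord: "E (u i) (u (i + 2))"
  have "is_cycle E V (map u [i..<Suc (i + 2)])"
    unfolding is_cycle_def
    using walk_along_path[of i "i + 2"] distinct_path[of "Suc (i + 2)" i] chord sym i_le by auto
  from girth_le_cycle[OF this] have "girth E V \<le> enat 3" by (simp add: numeral_3_eq_3)
  then show False using girth i_le order.trans by fastforce
qed

definition branch :: "'a \<Rightarrow> nat" where
  "branch z = (THE j. 0 < j \<and> j < k \<and> z \<in> T j)"

definition depth :: "nat \<Rightarrow> 'a \<Rightarrow> enat" where
  "depth j z = dist_in E ((V - W) \<union> {u j}) (u j) z"

definition x1 :: "'a \<Rightarrow> enat" where
  "x1 z = dist_in E Q (u k) z"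

definition x2 :: "'a \<Rightarrow> enat" where
  "x2 z = dist_in E Q (u 0) z"

text \<open>The distance from u i to any vertex, given the distances d j from u i to the path
  vertices u j: a vertex of T j is reached through u j, a vertex outside the interior through
  u 0 or u k.\<close>
definition dist_formula :: "(nat \<Rightarrow> nat) \<Rightarrow> 'a \<Rightarrow> enat" where
  "dist_formula d z = (if z \<in> Pbar then enat (d (branch z)) + depth (branch z) z
              else min (enat (d 0) + x2 z) (enat (d k) + x1 z))"

definition same_block :: "'a \<Rightarrow> 'a \<Rightarrow> bool" where
  "same_block x y \<longleftrightarrow> (x \<in> Q \<and> y \<in> Q) \<or> (\<exists>j\<in>{0<..<k}. x \<in> T j \<and> y \<in> T j)"

lemma branch_eq: "0 < j \<Longrightarrow> j < k \<Longrightarrow> z \<in> T j \<Longrightarrow> branch z = j"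
  unfolding branch_def
  by (rule the_equality) (auto dest: T_disjoint[of j, OF less_imp_le_nat less_imp_le_nat])

lemma depth_finite: "z \<in> T j \<Longrightarrow> depth j z \<noteq> \<infinity>"
  unfolding depth_def Tset_iff by blast

lemma depth_root: "depth j (u j) = 0"
  unfolding depth_def by (simp add: dist_in_refl)

lemma depth_edge: "y \<in> T j \<Longrightarrow> E x y \<Longrightarrow> depth j y \<le> depth j x + 1"
  unfolding depth_def Tset_iff by (blast intro: dist_in_edge)

lemma depth_pred:
  assumes "z \<in> T j" "z \<noteq> u j"
  obtains w where "w \<in> T j" "E w z" "depth j w + 1 \<le> depth j z"
proof -
  obtain w where w: "w \<in> (V - W) \<union> {u j}" "E w z" "depth j w + 1 \<le> depth j z"
    using depth_finite[OF assms(1)] assms(2) unfolding depth_def by (rule dist_in_pred_le)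
  have "depth j w + 1 \<noteq> \<infinity>" using enat_le_finite[OF w(3) depth_finite[OF assms(1)]] .
  then have "w \<in> T j" using w(1) unfolding Tset_iff depth_def by (simp add: plus_eq_infty_iff_enat)
  then show ?thesis using that w(2,3) by blast
qed

lemma dist_formula_T: "0 < j \<Longrightarrow> j < k \<Longrightarrow> z \<in> T j \<Longrightarrow> dist_formula d z = enat (d j) + depth j z"
  unfolding dist_formula_def using branch_eq by auto

lemma dist_formula_Q: "z \<in> Q \<Longrightarrow> dist_formula d z = min (enat (d 0) + x2 z) (enat (d k) + x1 z)"
  unfolding dist_formula_def by auto

lemma dist_formula_u:
  assumes "d 0 \<le> k" "d k \<le> k" "j \<le> k"
  shows "dist_formula d (u j) = enat (d j)"
proof -
  have ends: "x2 (u 0) = 0" "x1 (u k) = 0" "enat k \<le> x1 (u 0)" "enat k \<le> x2 (u k)"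
    using u_in_Pbar_iff[of 0] u_in_Pbar_iff[of k] u_in_V dist_Q_ends
      dist_in_sym[where E = E and W = Q and x = "u k" and y = "u 0", OF sym]
    unfolding x1_def x2_def by (auto simp: dist_in_refl)
  have "enat (d 0) \<le> enat (d k) + x1 (u 0)"
    using assms(1) ends(3) by (meson add_increasing enat_ord_simps(1) order.trans zero_le)
  moreover have "enat (d k) \<le> enat (d 0) + x2 (u k)"
    using assms(2) ends(4) by (meson add_increasing enat_ord_simps(1) order.trans zero_le)
  ultimately show ?thesis
    using assms(3) u_in_Pbar_iff[of j] u_in_V[of j] ends(1,2) dist_formula_Q[of "u j" d]
      dist_formula_T[of j "u j" d] root_in_Tset depth_root by (cases "j = 0 \<or> j = k") (auto simp: min_def add.commute)
qed

lemma edge_cases: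
  assumes "E x y"
  shows "same_block x y \<or> (\<exists>j<k. {x, y} = {u j, u (Suc j)})"
proof -
  have from_Pbar: "same_block a b \<or> (\<exists>j<k. {a, b} = {u j, u (Suc j)})"
    if "E a b" "a \<in> Pbar" for a b
  proof -
    obtain j where j: "0 < j" "j < k" "a \<in> T j" using \<open>a \<in> Pbar\<close> by auto
    from T_closed[OF j \<open>E a b\<close>] show ?thesis
    proof (elim disjE conjE)
      assume "b = u (j - 1)" "a = u j"
      then have "{a, b} = {u (j - 1), u (Suc (j - 1))}" using j by auto
      then show ?thesis using j by (intro disjI2 exI[of _ "j - 1"]) auto
    qed (use j in \<open>auto simp: same_block_def\<close>)
  qed
  show ?thesis
    using from_Pbar[OF assms] from_Pbar[OF sym[OF assms]] edge_in_V[OF assms] edge_in_V[OF sym[OF assms]]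
    unfolding same_block_def by (auto simp: insert_commute)
qed

lemma dist_formula_edge_block:
  assumes "same_block x y" "E x y"
  shows "dist_formula d y \<le> dist_formula d x + 1"
  using assms unfolding same_block_def
proof (elim disjE conjE bexE)
  assume "x \<in> Q" "y \<in> Q"
  then have "x1 y \<le> x1 x + 1" "x2 y \<le> x2 x + 1"
    unfolding x1_def x2_def using dist_in_edge[where E = E, OF \<open>E x y\<close>] by auto
  then show ?thesis using \<open>x \<in> Q\<close> \<open>y \<in> Q\<close> by (simp add: dist_formula_Q min_add_le_plus_one)
next
  fix j assume "j \<in> {0<..<k}" "x \<in> T j" "y \<in> T j"
  then have "dist_formula d x = enat (d j) + depth j x" "dist_formula d y = enat (d j) + depth j y"
    by (simp_all add: dist_formula_T)
  then show ?thesis using depth_edge[OF \<open>y \<in> T j\<close> \<open>E x y\<close>]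
    by (simp add: add.assoc add_left_mono)
qed

lemma dist_formula_pred_block:
  assumes z: "z \<in> V" "z \<notin> u ` {..k}" "dist_formula d z \<noteq> \<infinity>"
  shows "\<exists>w. same_block w z \<and> E w z \<and> dist_formula d w + 1 \<le> dist_formula d z"
proof (cases "z \<in> Pbar")
  case True
  then obtain j where j: "0 < j" "j < k" "z \<in> T j" by auto
  moreover have "z \<noteq> u j" using z(2) j by auto
  ultimately obtain w where w: "w \<in> T j" "E w z" "depth j w + 1 \<le> depth j z"
    by (blast elim: depth_pred)
  then have "dist_formula d w + 1 \<le> dist_formula d z"
    using j by (simp add: dist_formula_T add.assoc add_left_mono)
  moreover have "same_block w z" using w j unfolding same_block_def by auto
  ultimately show ?thesis using w by blast
next
  case False
  then have "z \<in> Q" using z(1) by blast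
  have "z \<noteq> u 0" "z \<noteq> u k" using z(2) by auto
  have "\<exists>w\<in>Q. E w z \<and> dist_formula d w + 1 \<le> dist_formula d z"
  proof (cases "enat (d 0) + x2 z \<le> enat (d k) + x1 z")
    case True
    then have dz: "dist_formula d z = enat (d 0) + x2 z" using dist_formula_Q[OF \<open>z \<in> Q\<close>] by simp
    then have "x2 z \<noteq> \<infinity>" using z(3) by (simp add: plus_eq_infty_iff_enat)
    then obtain w where w: "w \<in> Q" "E w z" "x2 w + 1 \<le> x2 z"
      using \<open>z \<noteq> u 0\<close> unfolding x2_def by (rule dist_in_pred_le)
    then have "dist_formula d w + 1 \<le> enat (d 0) + (x2 w + 1)"
      by (simp add: dist_formula_Q add.assoc add_right_mono)
    also have "\<dots> \<le> dist_formula d z" using w(3) dz by (simp add: add_left_mono)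
    finally show ?thesis using w by blast
  next
    case False
    then have dz: "dist_formula d z = enat (d k) + x1 z" using dist_formula_Q[OF \<open>z \<in> Q\<close>] by simp
    then have "x1 z \<noteq> \<infinity>" using z(3) by (simp add: plus_eq_infty_iff_enat)
    then obtain w where w: "w \<in> Q" "E w z" "x1 w + 1 \<le> x1 z"
      using \<open>z \<noteq> u k\<close> unfolding x1_def by (rule dist_in_pred_le)
    then have "dist_formula d w + 1 \<le> enat (d k) + (x1 w + 1)"
      by (simp add: dist_formula_Q add.assoc add_right_mono)
    also have "\<dots> \<le> dist_formula d z" using w(3) dz by (simp add: add_left_mono)
    finally show ?thesis using w by blast
  qed
  then show ?thesis using \<open>z \<in> Q\<close> unfolding same_block_def by blast
qed

lemma dist_eq_dist_formula:
  assumes d: "d 0 \<le> k" "d k \<le> k" "d i = 0"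
    and edges: "\<And>x y. G x y \<Longrightarrow>
      (same_block x y \<and> E x y) \<or> (\<exists>a\<le>k. \<exists>b\<le>k. x = u a \<and> y = u b \<and> d b \<le> d a + 1)"
    and block_edges: "\<And>x y. same_block x y \<Longrightarrow> E x y \<Longrightarrow> G x y"
    and path_pred: "\<And>j. j \<le> k \<Longrightarrow> j \<noteq> i \<Longrightarrow> \<exists>l\<le>k. G (u l) (u j) \<and> d l + 1 \<le> d j"
    and "z \<in> V"
  shows "dist_in G V (u i) z = dist_formula d z"
proof (rule antisym)
  have d_u: "j \<le> k \<Longrightarrow> dist_formula d (u j) = enat (d j)" for j
    using dist_formula_u[OF d(1,2)] .
  show "dist_in G V (u i) z \<le> dist_formula d z"
  proof (rule dist_in_le_potential[OF u_in_V _ \<open>z \<in> V\<close>])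
    fix y assume y: "y \<in> V" "y \<noteq> u i" "dist_formula d y \<noteq> \<infinity>"
    show "\<exists>x\<in>V. G x y \<and> dist_formula d x + 1 \<le> dist_formula d y"
    proof (cases "y \<in> u ` {..k}")
      case True
      then obtain j where j: "j \<le> k" "y = u j" by auto
      then obtain l where "l \<le> k" "G (u l) y" "d l + 1 \<le> d j"
        using path_pred[of j] y(2) by auto
      then show ?thesis using j d_u u_in_V by (intro bexI[of _ "u l"]) (auto simp: one_enat_def)
    next
      case False
      then obtain w where "same_block w y" "E w y" "dist_formula d w + 1 \<le> dist_formula d y"
        using dist_formula_pred_block[OF y(1) _ y(3)] by blast
      then show ?thesis using block_edges edge_in_V by blast
    qed
  qed (use i_le in simp)
  show "dist_formula d z \<le> dist_in G V (u i) z"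
  proof (rule potential_le_dist_in[OF _ _ \<open>z \<in> V\<close>])
    show "dist_formula d (u i) = 0" using d_u[of i] d(3) i_le by (simp add: zero_enat_def)
    fix x y assume "G x y"
    from edges[OF this] show "dist_formula d y \<le> dist_formula d x + 1"
    proof (elim disjE exE conjE)
      fix a b assume "a \<le> k" "b \<le> k" "x = u a" "y = u b" "d b \<le> d a + 1"
      then show ?thesis using d_u by (simp add: one_enat_def)
    qed (rule dist_formula_edge_block)
  qed
qed

lemma dist_formula_finite_iff: "dist_formula d z \<noteq> \<infinity> \<longleftrightarrow> z \<in> Pbar \<or> x1 z \<noteq> \<infinity> \<or> x2 z \<noteq> \<infinity>"
proof (cases "z \<in> Pbar")
  case True
  then obtain j where j: "0 < j" "j < k" "z \<in> T j" by auto
  then show ?thesis using depth_finite[OF j(3)]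
    by (auto simp: dist_formula_T plus_eq_infty_iff_enat simp del: not_infinity_eq)
next
  case False
  have "min a b = (\<infinity>::enat) \<longleftrightarrow> a = \<infinity> \<and> b = \<infinity>" for a b by (auto simp: min_def)
  then show ?thesis using False
    by (auto simp: dist_formula_def plus_eq_infty_iff_enat simp del: not_infinity_eq)
qed

lemma path_edge_ends:
  assumes "j < k" "{x, y} = {u j, u (Suc j)}"
  obtains a b where "a \<le> k" "b \<le> k" "x = u a" "y = u b" "b = Suc a \<or> a = Suc b"
  using assms that[of j "Suc j"] that[of "Suc j" j] by (auto simp: doubleton_eq_iff)

definition path_dist :: "nat \<Rightarrow> nat" where
  "path_dist j = (if i \<le> j then j - i else i - j)"

text \<open>After the swap u (Suc i) is reached through u (i + 2).\<close>
definition path_dist_swap :: "nat \<Rightarrow> nat" where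
  "path_dist_swap j = (if j \<le> i then i - j else if j = Suc i then 2 else j - i - 1)"

abbreviation "s_swap \<equiv> s(u i := (s (u i) - {u (Suc i)}) \<union> {u (i + 2)})"

lemma dist_before: "z \<in> V \<Longrightarrow> dist_in E V (u i) z = dist_formula path_dist z"
proof (rule dist_eq_dist_formula)
  show "path_dist 0 \<le> k" "path_dist k \<le> k" "path_dist i = 0" using i_le by (auto simp: path_dist_def)
next
  fix x y assume "E x y"
  from edge_cases[OF this]
  show "(same_block x y \<and> E x y) \<or> (\<exists>a\<le>k. \<exists>b\<le>k. x = u a \<and> y = u b \<and> path_dist b \<le> path_dist a + 1)"
  proof (elim disjE exE conjE)
    fix j assume "j < k" "{x, y} = {u j, u (Suc j)}"
    then obtain a b where ab: "a \<le> k" "b \<le> k" "x = u a" "y = u b" "b = Suc a \<or> a = Suc b"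
      by (rule path_edge_ends)
    then have "path_dist b \<le> path_dist a + 1" by (auto simp: path_dist_def)
    then show ?thesis using ab by blast
  qed (use \<open>E x y\<close> in blast)
next
  fix j assume "j \<le> k" "j \<noteq> i"
  then show "\<exists>l\<le>k. E (u l) (u j) \<and> path_dist l + 1 \<le> path_dist j"
  proof (cases "i < j")
    case True
    then show ?thesis
      using path_edge[of "j - 1"] \<open>j \<le> k\<close> by (intro exI[of _ "j - 1"]) (auto simp: path_dist_def)
  next
    case False
    then show ?thesis
      using path_edge[of j] sym \<open>j \<noteq> i\<close> i_le by (intro exI[of _ "Suc j"]) (auto simp: path_dist_def)
  qed
qed

lemma path_pair_eq_iff:
  "a \<le> k \<Longrightarrow> b \<le> k \<Longrightarrow> c \<le> k \<Longrightarrow> d \<le> k \<Longrightarrow> {u a, u b} = {u c, u d} \<longleftrightarrow> {a, b} = {c, d}"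
  by (auto simp: doubleton_eq_iff u_eq_iff)

lemma swap_edge_iff:
  "gadj V s_swap x y \<longleftrightarrow> (E x y \<and> {x, y} \<noteq> {u i, u (Suc i)}) \<or> {x, y} = {u i, u (i + 2)}"
proof -
  have "u (Suc i) \<in> s (u i)" using orient i_le by auto
  moreover have "u i \<notin> s (u (Suc i))"
    using arcs_inner(1)[of "Suc i"] i_le u_in_W[of i] u_eq_iff[of i "Suc (Suc i)"] by auto
  moreover have "u i \<notin> s (u i)"
    using strategy u_in_V[of i] i_le unfolding strategy_vector_def by (metis DiffE add_leD1 insertI1 subsetD)
  moreover have "u i \<in> V" "u (Suc i) \<in> V" "u (i + 2) \<in> V" using u_in_V i_le by auto
  moreover have "u i \<noteq> u (Suc i)" "u i \<noteq> u (i + 2)" "u (Suc i) \<noteq> u (i + 2)" using u_eq_iff i_le by auto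
  ultimately show ?thesis unfolding gadj_def by (auto simp: doubleton_eq_iff)
qed

lemma swap_edge_cases:
  assumes "gadj V s_swap x y"
  shows "(same_block x y \<and> E x y) \<or>
    (\<exists>a\<le>k. \<exists>b\<le>k. x = u a \<and> y = u b \<and> path_dist_swap b \<le> path_dist_swap a + 1)"
proof -
  consider "{x, y} = {u i, u (i + 2)}" | "E x y" "{x, y} \<noteq> {u i, u (Suc i)}"
    using assms swap_edge_iff by blast
  then show ?thesis
  proof cases
    case 1
    then have "(x = u i \<and> y = u (i + 2)) \<or> (x = u (i + 2) \<and> y = u i)" by (auto simp: doubleton_eq_iff)
    moreover have "path_dist_swap (i + 2) \<le> path_dist_swap i + 1" "path_dist_swap i \<le> path_dist_swap (i + 2) + 1"
      by (simp_all add: path_dist_swap_def)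
    moreover have "i \<le> k" "i + 2 \<le> k" using i_le by simp_all
    ultimately show ?thesis by blast
  next
    case 2
    from edge_cases[OF 2(1)] show ?thesis
    proof (elim disjE exE conjE)
      fix j assume j: "j < k" "{x, y} = {u j, u (Suc j)}"
      then have "j \<noteq> i" using 2(2) by auto
      obtain a b where ab: "a \<le> k" "b \<le> k" "x = u a" "y = u b" "b = Suc a \<or> a = Suc b"
        using j by (rule path_edge_ends)
      then have "{a, b} = {j, Suc j}" using j path_pair_eq_iff[of a b j "Suc j"] by simp
      then have "min a b \<noteq> i" using \<open>j \<noteq> i\<close> by (auto simp: doubleton_eq_iff)
      then have "path_dist_swap b \<le> path_dist_swap a + 1"
        using ab(5) by (auto simp: path_dist_swap_def)
      then show ?thesis using ab by blast
    qed (use 2 in blast)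
  qed
qed

lemma swap_keeps_block_edge:
  assumes "same_block x y" "E x y"
  shows "gadj V s_swap x y"
proof -
  have "u (Suc i) \<in> Pbar" using u_in_Pbar_iff[of "Suc i"] i_le by simp
  moreover have "\<not> (u i \<in> T j \<and> u (Suc i) \<in> T j)" if "j < k" for j
    using u_in_T_iff[of i j] u_in_T_iff[of "Suc i" j] that i_le by auto
  ultimately have "\<not> same_block (u i) (u (Suc i))" "\<not> same_block (u (Suc i)) (u i)"
    unfolding same_block_def by auto
  then have "{x, y} \<noteq> {u i, u (Suc i)}" using assms(1) by (auto simp: doubleton_eq_iff)
  then show ?thesis using swap_edge_iff assms(2) by blast
qed

lemma swap_keeps_path_edge:
  assumes "l < k" "l \<noteq> i"
  shows "gadj V s_swap (u l) (u (Suc l))" "gadj V s_swap (u (Suc l)) (u l)"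
  using swap_edge_iff path_edge[OF assms(1)] sym assms path_pair_eq_iff[of l "Suc l" i "Suc i"] i_le
  by (auto simp: doubleton_eq_iff)

lemma dist_after: "z \<in> V \<Longrightarrow> dist_in (gadj V s_swap) V (u i) z = dist_formula path_dist_swap z"
proof (rule dist_eq_dist_formula[OF _ _ _ swap_edge_cases swap_keeps_block_edge])
  show "path_dist_swap 0 \<le> k" "path_dist_swap k \<le> k" "path_dist_swap i = 0"
    using i_le by (auto simp: path_dist_swap_def)
next
  fix j assume j: "j \<le> k" "j \<noteq> i"
  consider "j < i" | "j = Suc i" | "j = i + 2" | "i + 2 < j" using j by linarith
  then show "\<exists>l\<le>k. gadj V s_swap (u l) (u j) \<and> path_dist_swap l + 1 \<le> path_dist_swap j"
  proof cases
    case 1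
    then show ?thesis using swap_keeps_path_edge(2)[of j] i_le
      by (intro exI[of _ "Suc j"]) (auto simp: path_dist_swap_def)
  next
    case 2
    then show ?thesis using swap_keeps_path_edge(2)[of "Suc i"] i_le
      by (intro exI[of _ "i + 2"]) (auto simp: path_dist_swap_def)
  next
    case 3
    then show ?thesis using swap_edge_iff i_le
      by (intro exI[of _ i]) (auto simp: path_dist_swap_def)
  next
    case 4
    then show ?thesis using swap_keeps_path_edge(1)[of "j - 1"] j
      by (intro exI[of _ "j - 1"]) (auto simp: path_dist_swap_def)
  qed
qed

lemma card_swap: "card (s_swap (u i)) = card (s (u i))"
proof -
  have "u (Suc i) \<in> s (u i)" using orient i_le by auto
  moreover have "u (i + 2) \<notin> s (u i)" using no_chord u_in_V i_le unfolding gadj_def by auto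
  moreover have "finite (s (u i))"
    using strategy u_in_V[of i] i_le finite_V unfolding strategy_vector_def
    by (meson Diff_subset add_leD1 finite_subset)
  moreover have "s_swap (u i) = insert (u (i + 2)) (s (u i) - {u (Suc i)})" by auto
  moreover have "card (s (u i)) > 0" using calculation(1,3) card_gt_0_iff by blast
  ultimately show ?thesis by simp
qed

lemma dist_formula_finite:
  assumes "z \<in> V"
  shows "dist_formula path_dist z \<noteq> \<infinity>" "dist_formula path_dist_swap z \<noteq> \<infinity>"
proof -
  have "dist_in E V (u i) z < \<infinity>" using connected u_in_V i_le assms unfolding connected_in_def by simp
  then show "dist_formula path_dist z \<noteq> \<infinity>" using dist_before[OF assms] by simp
  then show "dist_formula path_dist_swap z \<noteq> \<infinity>" using dist_formula_finite_iff by blast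
qed

definition dist_change :: "'a \<Rightarrow> real" where
  "dist_change z = real (the_enat (dist_formula path_dist_swap z)) - real (the_enat (dist_formula path_dist z))"

lemma cost_swap_diff_eq_sum:
  "cost \<alpha> V s_swap (u i) - cost \<alpha> V s (u i) = ereal (\<Sum>z\<in>V. dist_change z)"
proof -
  have ui: "u i \<in> V" "i \<le> k" using u_in_V i_le by auto
  have "cost \<alpha> V s (u i)
      = ereal (\<alpha> * real (card (s (u i))) + (\<Sum>z\<in>V - {u i}. real (the_enat (dist_formula path_dist z))))"
    using cost_eq_real[OF finite_V, of "u i" s \<alpha>] dist_before dist_formula_finite by simp
  moreover have "cost \<alpha> V s_swap (u i)
      = ereal (\<alpha> * real (card (s (u i))) + (\<Sum>z\<in>V - {u i}. real (the_enat (dist_formula path_dist_swap z))))"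
    using cost_eq_real[OF finite_V, of "u i" s_swap \<alpha>] dist_after dist_formula_finite card_swap by simp
  moreover have "dist_change (u i) = 0"
    using dist_formula_u[OF _ _ ui(2), of path_dist] dist_formula_u[OF _ _ ui(2), of path_dist_swap] i_le
    by (simp add: dist_change_def path_dist_def path_dist_swap_def)
  then have "(\<Sum>z\<in>V - {u i}. dist_change z) = (\<Sum>z\<in>V. dist_change z)"
    using finite_V ui by (simp add: sum_diff1)
  ultimately show ?thesis by (simp add: dist_change_def sum_subtractf)
qed

lemma sum_T_path_dist_diff:
  "(\<Sum>j\<in>{0<..<k}. real (card (T j)) * (real (path_dist_swap j) - real (path_dist j)))
    = real (card (T (Suc i))) - (\<Sum>j\<in>{i+2..<k}. real (card (T j)))"
proof -
  have "(\<Sum>j\<in>{0<..<k}. real (card (T j)) * (real (path_dist_swap j) - real (path_dist j)))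
      = (\<Sum>j\<in>{0<..<k}. (if j = Suc i then real (card (T j)) else 0)
                       - (if i + 2 \<le> j then real (card (T j)) else 0))"
    by (rule sum.cong) (auto simp: path_dist_def path_dist_swap_def of_nat_diff)
  also have "\<dots> = real (card (T (Suc i))) - (\<Sum>j\<in>{i+2..<k}. real (card (T j)))"
  proof -
    have "{j \<in> {0<..<k}. i + 2 \<le> j} = {i+2..<k}" by auto
    then have "(\<Sum>j\<in>{0<..<k}. if i + 2 \<le> j then real (card (T j)) else 0) = (\<Sum>j\<in>{i+2..<k}. real (card (T j)))"
      by (simp add: sum.inter_filter[symmetric])
    then show ?thesis using i_le by (simp add: sum_subtractf sum.delta)
  qed
  finally show ?thesis .
qed

lemma sum_dist_change_Pbar:
  "(\<Sum>z\<in>Pbar. dist_change z) = real (card (T (Suc i))) - (\<Sum>j\<in>{i+2..<k}. real (card (T j)))"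
proof -
  have "(\<Sum>z\<in>Pbar. dist_change z) = (\<Sum>j\<in>{0<..<k}. \<Sum>z\<in>T j. dist_change z)"
  proof (rule sum.UNION_disjoint)
    show "\<forall>j\<in>{0<..<k}. finite (T j)"
      using finite_subset[OF Tset_subset_V[OF u_in_V] finite_V] by simp
    show "\<forall>j\<in>{0<..<k}. \<forall>l\<in>{0<..<k}. j \<noteq> l \<longrightarrow> T j \<inter> T l = {}"
      using T_disjoint by auto
  qed simp
  also have "\<dots> = (\<Sum>j\<in>{0<..<k}. real (card (T j)) * (real (path_dist_swap j) - real (path_dist j)))"
  proof (rule sum.cong)
    fix j assume "j \<in> {0<..<k}"
    then have "dist_change z = real (path_dist_swap j) - real (path_dist j)" if "z \<in> T j" for z
      using depth_finite[OF that] that by (auto simp: dist_change_def dist_formula_T)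
    then show "(\<Sum>z\<in>T j. dist_change z) = real (card (T j)) * (real (path_dist_swap j) - real (path_dist j))"
      by simp
  qed simp
  finally show ?thesis using sum_T_path_dist_diff by simp
qed

text \<open>Only the distance through u k changes, and it drops by one; so a vertex outside the
  interior gets closer exactly when that route was already a shortest one.\<close>
lemma dist_change_Q:
  assumes "z \<in> Q"
  shows "dist_change z = (if x1 z + enat (k - i) \<le> x2 z + enat i then -1 else 0)"
proof -
  define q where "q = k - i - 1"
  have q: "k - i = Suc q" using i_le unfolding q_def by simp
  have "path_dist 0 = i" "path_dist k = Suc q" "path_dist_swap 0 = i" "path_dist_swap k = q"
    using i_le q by (auto simp: path_dist_def path_dist_swap_def)
  moreover have "enat (Suc q) + x1 z \<le> enat i + x2 z \<longleftrightarrow> x1 z + enat (Suc q) \<le> x2 z + enat i"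
    by (simp add: add.commute)
  ultimately show ?thesis
    using assms dist_formula_finite(1)[of z] the_enat_min_diff[of "enat i + x2 z" q "x1 z"]
    unfolding q dist_change_def by (simp add: dist_formula_Q)
qed

lemma sum_dist_change_Q:
  "(\<Sum>z\<in>Q. dist_change z) = - real (card {v \<in> Q. x1 v + enat (k - i) \<le> x2 v + enat i})"
proof -
  have "(\<Sum>z\<in>Q. dist_change z) = (\<Sum>z\<in>Q. if x1 z + enat (k - i) \<le> x2 z + enat i then -1 else 0)"
    using dist_change_Q by (intro sum.cong) auto
  also have "\<dots> = (\<Sum>z\<in>{v \<in> Q. x1 v + enat (k - i) \<le> x2 v + enat i}. -1)"
    by (rule sum.inter_filter[symmetric]) (simp add: finite_V)
  finally show ?thesis by simp
qed

lemma cost_swap_diff: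
  "cost \<alpha> V s_swap (u i) - cost \<alpha> V s (u i)
    = ereal (real (card (T (Suc i))) - (\<Sum>j\<in>{i+2..<k}. real (card (T j)))
        - real (card {v \<in> Q. x1 v + enat (k - i) \<le> x2 v + enat i}))"
proof -
  have "(\<Sum>z\<in>V. dist_change z) = (\<Sum>z\<in>Q. dist_change z) + (\<Sum>z\<in>Pbar. dist_change z)"
    by (rule sum.subset_diff[OF Pbar_subset_V finite_V])
  then show ?thesis
    using cost_swap_diff_eq_sum sum_dist_change_Pbar sum_dist_change_Q by simp
qed

end

theorem lemma1:
  fixes V :: "'a set" and s :: "'a \<Rightarrow> 'a set" and \<alpha> :: real
    and W :: "'a set" and u :: "nat \<Rightarrow> 'a" and k i :: nat
  assumes "finite V" and "\<alpha> > 0"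
    and NE: "nash_equilibrium \<alpha> V s"
    and H: "two_edge_cc (gadj V s) V W" and nontriv: "card W \<ge> 3"
    and path: "two_path V s W u k"
    and orient: "\<forall>j<k. u (Suc j) \<in> s (u j)"
    and gir: "enat (2 * k) \<le> girth (gadj V s) V"
    and i: "i + 2 \<le> k"
  shows
    "let E = gadj V s;
         U = (\<lambda>j. card (Tset E V W (u j)));
         Pbar = (\<Union>j\<in>{0<..<k}. Tset E V W (u j));
         x1 = (\<lambda>v. dist_in E (V - Pbar) v (u k));
         x2 = (\<lambda>v. dist_in E (V - Pbar) v (u 0));
         N = card {v \<in> V - Pbar. x1 v + enat (k - i) \<le> x2 v + enat i};
         s' = s(u i := (s (u i) - {u (Suc i)}) \<union> {u (i + 2)})
     in cost \<alpha> V s' (u i) - cost \<alpha> V s (u i)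
        = ereal (real (U (Suc i)) - (\<Sum>j\<in>{i+2..<k}. real (U j)) - real N)"
proof -
  interpret two_path_swap V s W u k i
  proof unfold_locales
    show "strategy_vector V s" using NE unfolding nash_equilibrium_def by blast
    show "connected_in (gadj V s) V" using nash_equilibrium_connected[OF \<open>finite V\<close> NE] .
  qed (use assms gadj_sym gadj_in_V in auto)
  have "dist_in E Q v (u k) = x1 v" "dist_in E Q v (u 0) = x2 v" for v
    unfolding x1_def x2_def by (simp_all add: dist_in_sym[OF sym])
  then show ?thesis using cost_swap_diff by (simp add: Let_def)
qed

end
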